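(* Let $(\mathcal{S},\mathcal{A},\tau,\mu_0,\gamma)$ be fixed and let $\beta>0$. For reward functions $R,R'$, let $Q^{H}_{\beta,R}$ and $Q^{H}_{\beta,R'}$ be the corresponding soft $Q$-functions. Then $Q^{H}_{\beta,R}=Q^{H}_{\beta,R'}$ if and only if $R'$ is produced from $R$ by $S'$-redistribution.
   Context: An MDP is a tuple $(\mathcal{S},\mathcal{A},\tau,\mu_0,R,\gamma)$ with finite $\mathcal{S}$, $\mathcal{A}$, transition dynamics $\tau:\mathcal{S}\times\mathcal{A}\to\Delta(\mathcal{S})$, initial distribution $\mu_0$, deterministic reward $R:\mathcal{S}\times\mathcal{A}\times\mathcal{S}\to\mathbb{R}$, and $\gamma\in(0,1)$. For inverse temperature $\beta>0$, the soft $Q$-function $Q^H_\beta$ is the unique function $\mathcal{S}\times\mathcal{A}\to\mathbb{R}$ satisfying $Q^H_\beta(s,a)=\mathbb{E}_{S'\sim\tau(s,a)}\big[R(s,a,S')+\gamma\frac{1}{\beta}\log\sum_{a'\in\mathcal{A}}\exp(\beta Q^H_\beta(S',a'))\big]$ for all $s,a$. Given $\tau$, $R'$ is produced from $R$ by $S'$-redistribution if $\mathbb{E}_{S'\sim\tau(s,a)}[R(s,a,S')]=\mathbb{E}_{S'\sim\tau(s,a)}[R'(s,a,S')]$ for all $s,a$. *)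

theory Defs
  imports "HOL-Probability.Probability"
begin

definition soft_bellman ::
  "('s::finite \<Rightarrow> 'a::finite \<Rightarrow> 's pmf) \<Rightarrow> real \<Rightarrow> real \<Rightarrow>
   ('s \<Rightarrow> 'a \<Rightarrow> 's \<Rightarrow> real) \<Rightarrow> ('s \<Rightarrow> 'a \<Rightarrow> real) \<Rightarrow> bool" where
  "soft_bellman \<tau> \<gamma> \<beta> R Q \<longleftrightarrow>
     (\<forall>s a. Q s a = measure_pmf.expectation (\<tau> s a)
        (\<lambda>s'. R s a s' + \<gamma> * ((1 / \<beta>) * ln (\<Sum>a'\<in>UNIV. exp (\<beta> * Q s' a')))))"

definition soft_Q ::
  "('s::finite \<Rightarrow> 'a::finite \<Rightarrow> 's pmf) \<Rightarrow> real \<Rightarrow> real \<Rightarrow>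
   ('s \<Rightarrow> 'a \<Rightarrow> 's \<Rightarrow> real) \<Rightarrow> ('s \<Rightarrow> 'a \<Rightarrow> real)" where
  "soft_Q \<tau> \<gamma> \<beta> R = (THE Q. soft_bellman \<tau> \<gamma> \<beta> R Q)"

definition S'_redistribution ::
  "('s \<Rightarrow> 'a \<Rightarrow> 's pmf) \<Rightarrow> ('s \<Rightarrow> 'a \<Rightarrow> 's \<Rightarrow> real) \<Rightarrow> ('s \<Rightarrow> 'a \<Rightarrow> 's \<Rightarrow> real) \<Rightarrow> bool" where
  "S'_redistribution \<tau> R R' \<longleftrightarrow>
     (\<forall>s a. measure_pmf.expectation (\<tau> s a) (R s a) = measure_pmf.expectation (\<tau> s a) (R' s a))"

end

theory Submission
  imports Defs
begin

text \<open>The soft Bellman equation depends on the reward \<open>R\<close> only through the expected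
immediate reward \<open>r(s,a) = E[R(s,a,S')]\<close>: it says that \<open>Q\<close> is a fixed point of
\<open>Q \<mapsto> r + \<gamma> E[V Q]\<close>, where \<open>V\<close> is the log-sum-exp value. Since \<open>V\<close> is 1-Lipschitz in the
sup-distance, this operator is a \<open>\<gamma>\<close>-contraction and has exactly one fixed point, so
\<open>Q\<^sup>H\<close> is well defined and determined by \<open>r\<close>. Conversely, if \<open>Q\<close> is the fixed point for
both \<open>r\<close> and \<open>r'\<close>, subtracting the two equations gives \<open>r = r'\<close>.\<close>

definition sup_dist ::
  "('s::finite \<Rightarrow> 'a::finite \<Rightarrow> real) \<Rightarrow> ('s \<Rightarrow> 'a \<Rightarrow> real) \<Rightarrow> real" where
  "sup_dist Q Q' = Max (range (\<lambda>(s, a). \<bar>Q s a - Q' s a\<bar>))"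

lemma abs_le_sup_dist: "\<bar>Q s a - Q' s a\<bar> \<le> sup_dist Q Q'"
  unfolding sup_dist_def by (rule Max_ge) (auto intro: image_eqI[where x = "(s, a)"])

lemma sup_dist_le: "(\<And>s a. \<bar>Q s a - Q' s a\<bar> \<le> c) \<Longrightarrow> sup_dist Q Q' \<le> c"
  unfolding sup_dist_def by (subst Max_le_iff) auto

lemma sup_dist_nonneg: "0 \<le> sup_dist Q Q'"
  using abs_le_sup_dist[of Q undefined undefined Q'] by linarith

lemma sup_dist_le_0_imp_eq:
  assumes "sup_dist Q Q' \<le> 0"
  shows "Q = Q'"
proof (intro ext)
  fix s a
  have "\<bar>Q s a - Q' s a\<bar> \<le> 0"
    using abs_le_sup_dist[of Q s a Q'] assms by linarith
  then show "Q s a = Q' s a" by simp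
qed

lemma sup_dist_le_sum: "sup_dist Q Q' \<le> (\<Sum>(s, a)\<in>UNIV. \<bar>Q s a - Q' s a\<bar>)"
proof (rule sup_dist_le)
  fix s a
  show "\<bar>Q s a - Q' s a\<bar> \<le> (\<Sum>(s, a)\<in>UNIV. \<bar>Q s a - Q' s a\<bar>)"
    by (rule member_le_sum[of "(s, a)" UNIV "\<lambda>(s, a). \<bar>Q s a - Q' s a\<bar>", simplified]) auto
qed

lemma tendsto_sup_dist_zero_iff:
  fixes Q :: "nat \<Rightarrow> 's::finite \<Rightarrow> 'a::finite \<Rightarrow> real"
  shows "(\<lambda>n. sup_dist (Q n) L) \<longlonglongrightarrow> 0 \<longleftrightarrow> (\<forall>s a. (\<lambda>n. Q n s a) \<longlonglongrightarrow> L s a)"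
proof (intro iffI allI)
  fix s a
  assume "(\<lambda>n. sup_dist (Q n) L) \<longlonglongrightarrow> 0"
  then have "(\<lambda>n. Q n s a - L s a) \<longlonglongrightarrow> 0"
    by (rule Lim_null_comparison[rotated]) (simp add: abs_le_sup_dist)
  then show "(\<lambda>n. Q n s a) \<longlonglongrightarrow> L s a"
    by (rule LIM_zero_cancel)
next
  assume "\<forall>s a. (\<lambda>n. Q n s a) \<longlonglongrightarrow> L s a"
  then have "(\<lambda>n. \<Sum>(s, a)\<in>UNIV. \<bar>Q n s a - L s a\<bar>)
      \<longlonglongrightarrow> (\<Sum>(s, a)\<in>UNIV. \<bar>L s a - L s a\<bar>)"
    unfolding case_prod_beta by (intro tendsto_intros) auto
  then have "(\<lambda>n. \<Sum>(s, a)\<in>UNIV. \<bar>Q n s a - L s a\<bar>) \<longlonglongrightarrow> 0"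
    by simp
  then show "(\<lambda>n. sup_dist (Q n) L) \<longlonglongrightarrow> 0"
    by (rule tendsto_sandwich[where f = "\<lambda>_. 0", rotated 3])
      (auto simp: sup_dist_nonneg sup_dist_le_sum)
qed

locale sup_contraction =
  fixes T :: "('s::finite \<Rightarrow> 'a::finite \<Rightarrow> real) \<Rightarrow> ('s \<Rightarrow> 'a \<Rightarrow> real)"
    and \<gamma> :: real
  assumes factor_nonneg: "0 \<le> \<gamma>"
    and factor_less_1: "\<gamma> < 1"
    and contraction: "sup_dist (T Q) (T Q') \<le> \<gamma> * sup_dist Q Q'"
begin

lemma iterate_sup_dist_le:
  "sup_dist ((T ^^ Suc n) Q) ((T ^^ n) Q) \<le> \<gamma> ^ n * sup_dist (T Q) Q"
proof (induction n)
  case (Suc n)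
  have "sup_dist ((T ^^ Suc (Suc n)) Q) ((T ^^ Suc n) Q)
      \<le> \<gamma> * sup_dist ((T ^^ Suc n) Q) ((T ^^ n) Q)"
    using contraction by simp
  also have "\<dots> \<le> \<gamma> * (\<gamma> ^ n * sup_dist (T Q) Q)"
    using Suc.IH factor_nonneg by (rule mult_left_mono)
  finally show ?case by (simp add: mult.assoc)
qed simp

lemma iterates_converge:
  obtains L where "\<And>s a. (\<lambda>n. (T ^^ n) Q s a) \<longlonglongrightarrow> L s a"
proof -
  have "convergent (\<lambda>n. (T ^^ n) Q s a)" for s a
  proof -
    have "summable (\<lambda>k. (T ^^ Suc k) Q s a - (T ^^ k) Q s a)"
    proof (rule summable_comparison_test')
      show "summable (\<lambda>k. sup_dist (T Q) Q * \<gamma> ^ k)"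
        using factor_nonneg factor_less_1 by (intro summable_mult summable_geometric) auto
      show "norm ((T ^^ Suc k) Q s a - (T ^^ k) Q s a) \<le> sup_dist (T Q) Q * \<gamma> ^ k" for k
        using abs_le_sup_dist[of "(T ^^ Suc k) Q" s a "(T ^^ k) Q"] iterate_sup_dist_le[of k Q]
        by (simp add: mult.commute)
    qed
    then have "convergent (\<lambda>n. \<Sum>k<n. (T ^^ Suc k) Q s a - (T ^^ k) Q s a)"
      by (simp only: summable_iff_convergent)
    moreover have "(\<Sum>k<n. (T ^^ Suc k) Q s a - (T ^^ k) Q s a) = (T ^^ n) Q s a - Q s a" for n
      using sum_lessThan_telescope[of "\<lambda>k. (T ^^ k) Q s a" n] by (simp only: funpow_0)
    ultimately have "convergent (\<lambda>n. (T ^^ n) Q s a - Q s a)"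
      by (simp only:)
    then show ?thesis
      by (simp only: convergent_diff_const_right_iff)
  qed
  then show ?thesis
    by (intro that[of "\<lambda>s a. lim (\<lambda>n. (T ^^ n) Q s a)"]) (simp add: convergent_LIMSEQ_iff)
qed

lemma fixpoint_exists: "\<exists>Q. T Q = Q"
proof -
  obtain L where L: "\<And>s a. (\<lambda>n. (T ^^ n) (\<lambda>_ _. 0) s a) \<longlonglongrightarrow> L s a"
    using iterates_converge by blast
  have "T L = L"
  proof (intro ext)
    fix s a
    have "(\<lambda>n. sup_dist ((T ^^ n) (\<lambda>_ _. 0)) L) \<longlonglongrightarrow> 0"
      using L by (simp add: tendsto_sup_dist_zero_iff)
    then have "(\<lambda>n. \<gamma> * sup_dist ((T ^^ n) (\<lambda>_ _. 0)) L) \<longlonglongrightarrow> 0"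
      by (rule tendsto_mult_right_zero)
    then have "(\<lambda>n. sup_dist (T ((T ^^ n) (\<lambda>_ _. 0))) (T L)) \<longlonglongrightarrow> 0"
      by (rule tendsto_sandwich[where f = "\<lambda>_. 0", rotated 3])
        (auto simp: sup_dist_nonneg contraction)
    then have "(\<lambda>n. (T ^^ Suc n) (\<lambda>_ _. 0) s a) \<longlonglongrightarrow> T L s a"
      by (simp add: tendsto_sup_dist_zero_iff)
    moreover have "(\<lambda>n. (T ^^ Suc n) (\<lambda>_ _. 0) s a) \<longlonglongrightarrow> L s a"
      using L by (rule LIMSEQ_Suc)
    ultimately show "T L s a = L s a"
      by (rule LIMSEQ_unique)
  qed
  then show ?thesis by blast
qed

lemma fixpoint_unique:
  assumes "T Q = Q" "T Q' = Q'"
  shows "Q = Q'"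
proof (rule sup_dist_le_0_imp_eq)
  have "sup_dist Q Q' \<le> \<gamma> * sup_dist Q Q'"
    using contraction[of Q Q'] assms by simp
  then have "(1 - \<gamma>) * sup_dist Q Q' \<le> 0"
    by (simp add: algebra_simps)
  then show "sup_dist Q Q' \<le> 0"
    using factor_less_1 by (simp add: mult_le_0_iff)
qed

lemma ex1_fixpoint: "\<exists>!Q. T Q = Q"
  using fixpoint_exists fixpoint_unique by blast

end

definition soft_value :: "real \<Rightarrow> ('s \<Rightarrow> 'a::finite \<Rightarrow> real) \<Rightarrow> 's \<Rightarrow> real" where
  "soft_value \<beta> Q s = (1 / \<beta>) * ln (\<Sum>a\<in>UNIV. exp (\<beta> * Q s a))"

lemma soft_value_mono:
  assumes "0 < \<beta>" and "\<And>a. Q s a \<le> Q' s a"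
  shows "soft_value \<beta> Q s \<le> soft_value \<beta> Q' s"
proof -
  have "(\<Sum>a\<in>UNIV. exp (\<beta> * Q s a)) \<le> (\<Sum>a\<in>UNIV. exp (\<beta> * Q' s a))"
    using assms by (intro sum_mono) simp
  moreover have "0 < (\<Sum>a\<in>UNIV. exp (\<beta> * Q s a))"
    by (intro sum_pos) auto
  ultimately show ?thesis
    unfolding soft_value_def using \<open>0 < \<beta>\<close> by (simp add: divide_right_mono)
qed

lemma soft_value_add_const:
  assumes "\<beta> \<noteq> 0"
  shows "soft_value \<beta> (\<lambda>s a. Q s a + c) s = soft_value \<beta> Q s + c"
proof -
  have "(\<Sum>a\<in>UNIV. exp (\<beta> * (Q s a + c))) = exp (\<beta> * c) * (\<Sum>a\<in>UNIV. exp (\<beta> * Q s a))"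
    by (simp add: sum_distrib_left distrib_left exp_add mult.commute)
  moreover have "0 < (\<Sum>a\<in>UNIV. exp (\<beta> * Q s a))"
    by (intro sum_pos) auto
  ultimately show ?thesis
    unfolding soft_value_def using assms by (simp add: ln_mult field_simps)
qed

lemma soft_value_lipschitz:
  assumes "0 < \<beta>" and "\<And>a. \<bar>Q s a - Q' s a\<bar> \<le> c"
  shows "\<bar>soft_value \<beta> Q s - soft_value \<beta> Q' s\<bar> \<le> c"
proof -
  have "Q s a \<le> Q' s a + c" "Q' s a \<le> Q s a + c" for a
    using assms(2)[of a] by (simp_all add: abs_le_iff)
  then have "soft_value \<beta> Q s \<le> soft_value \<beta> (\<lambda>s a. Q' s a + c) s"
    and "soft_value \<beta> Q' s \<le> soft_value \<beta> (\<lambda>s a. Q s a + c) s"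
    using \<open>0 < \<beta>\<close> by (auto intro: soft_value_mono)
  then show ?thesis
    using \<open>0 < \<beta>\<close> by (simp add: soft_value_add_const abs_le_iff)
qed

lemma expectation_abs_diff_le:
  fixes M :: "'s::finite pmf" and f g :: "'s \<Rightarrow> real"
  assumes "\<And>x. \<bar>f x - g x\<bar> \<le> c"
  shows "\<bar>measure_pmf.expectation M f - measure_pmf.expectation M g\<bar> \<le> c"
proof -
  have integrable: "integrable M h" for h :: "'s \<Rightarrow> real"
    by (simp add: integrable_measure_pmf_finite)
  have bounds: "f x - g x \<le> c" "- c \<le> f x - g x" for x
    using assms[of x] by (auto simp: abs_le_iff)
  have "measure_pmf.expectation M (\<lambda>x. f x - g x) \<le> c"
    by (intro measure_pmf.integral_le_const integrable AE_I2 bounds)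
  moreover have "- c \<le> measure_pmf.expectation M (\<lambda>x. f x - g x)"
    by (intro measure_pmf.integral_ge_const integrable AE_I2 bounds)
  ultimately have "\<bar>measure_pmf.expectation M (\<lambda>x. f x - g x)\<bar> \<le> c"
    by linarith
  then show ?thesis
    by (simp add: integrable)
qed

definition expected_reward ::
  "('s \<Rightarrow> 'a \<Rightarrow> 's pmf) \<Rightarrow> ('s \<Rightarrow> 'a \<Rightarrow> 's \<Rightarrow> real) \<Rightarrow> 's \<Rightarrow> 'a \<Rightarrow> real" where
  "expected_reward \<tau> R s a = measure_pmf.expectation (\<tau> s a) (R s a)"

lemma S'_redistribution_iff_expected_reward_eq:
  "S'_redistribution \<tau> R R' \<longleftrightarrow> expected_reward \<tau> R = expected_reward \<tau> R'"
  unfolding S'_redistribution_def expected_reward_def by (auto dest: fun_cong)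

definition soft_bellman_op ::
  "('s::finite \<Rightarrow> 'a::finite \<Rightarrow> 's pmf) \<Rightarrow> real \<Rightarrow> real \<Rightarrow>
   ('s \<Rightarrow> 'a \<Rightarrow> real) \<Rightarrow> ('s \<Rightarrow> 'a \<Rightarrow> real) \<Rightarrow> ('s \<Rightarrow> 'a \<Rightarrow> real)" where
  "soft_bellman_op \<tau> \<gamma> \<beta> r Q s a =
     r s a + \<gamma> * measure_pmf.expectation (\<tau> s a) (soft_value \<beta> Q)"

lemma soft_bellman_iff_fixpoint:
  "soft_bellman \<tau> \<gamma> \<beta> R Q \<longleftrightarrow> soft_bellman_op \<tau> \<gamma> \<beta> (expected_reward \<tau> R) Q = Q"
proof -
  have "measure_pmf.expectation (\<tau> s a) (\<lambda>s'. R s a s' + \<gamma> * soft_value \<beta> Q s')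
      = soft_bellman_op \<tau> \<gamma> \<beta> (expected_reward \<tau> R) Q s a" for s a
    unfolding soft_bellman_op_def expected_reward_def
    by (simp add: integrable_measure_pmf_finite)
  then show ?thesis
    unfolding soft_bellman_def soft_value_def[symmetric] by (auto simp: fun_eq_iff)
qed

lemma soft_bellman_op_reward_determined:
  assumes "soft_bellman_op \<tau> \<gamma> \<beta> r Q = soft_bellman_op \<tau> \<gamma> \<beta> r' Q"
  shows "r = r'"
  using assms by (auto simp: fun_eq_iff soft_bellman_op_def)

lemma sup_contraction_soft_bellman_op:
  fixes \<tau> :: "'s::finite \<Rightarrow> 'a::finite \<Rightarrow> 's pmf"
  assumes "0 < \<beta>" "0 \<le> \<gamma>" "\<gamma> < 1"
  shows "sup_contraction (soft_bellman_op \<tau> \<gamma> \<beta> r) \<gamma>"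
proof
  fix Q Q' :: "'s \<Rightarrow> 'a \<Rightarrow> real"
  have "\<bar>soft_bellman_op \<tau> \<gamma> \<beta> r Q s a - soft_bellman_op \<tau> \<gamma> \<beta> r Q' s a\<bar>
      \<le> \<gamma> * sup_dist Q Q'" for s a
  proof -
    have "\<bar>measure_pmf.expectation (\<tau> s a) (soft_value \<beta> Q)
          - measure_pmf.expectation (\<tau> s a) (soft_value \<beta> Q')\<bar> \<le> sup_dist Q Q'"
      using assms(1) by (intro expectation_abs_diff_le soft_value_lipschitz abs_le_sup_dist)
    then show ?thesis
      using assms(2)
      by (simp add: soft_bellman_op_def right_diff_distrib[symmetric] abs_mult mult_left_mono)
  qed
  then show "sup_dist (soft_bellman_op \<tau> \<gamma> \<beta> r Q) (soft_bellman_op \<tau> \<gamma> \<beta> r Q')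
      \<le> \<gamma> * sup_dist Q Q'"
    by (rule sup_dist_le)
qed (use assms in auto)

lemma soft_Q_is_fixpoint:
  assumes "0 < \<beta>" "0 \<le> \<gamma>" "\<gamma> < 1"
  shows "soft_bellman_op \<tau> \<gamma> \<beta> (expected_reward \<tau> R) (soft_Q \<tau> \<gamma> \<beta> R) = soft_Q \<tau> \<gamma> \<beta> R"
  using sup_contraction.ex1_fixpoint[OF sup_contraction_soft_bellman_op[OF assms]]
  unfolding soft_Q_def soft_bellman_iff_fixpoint by (rule theI')

lemma soft_Q_cong_expected_reward:
  assumes "expected_reward \<tau> R = expected_reward \<tau> R'"
  shows "soft_Q \<tau> \<gamma> \<beta> R = soft_Q \<tau> \<gamma> \<beta> R'"
  unfolding soft_Q_def soft_bellman_iff_fixpoint assms ..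

theorem theorem3p2:
  fixes \<tau> :: "'s::finite \<Rightarrow> 'a::finite \<Rightarrow> 's pmf"
    and \<mu>0 :: "'s pmf"
    and \<gamma> \<beta> :: real
    and R R' :: "'s \<Rightarrow> 'a \<Rightarrow> 's \<Rightarrow> real"
  assumes "0 < \<gamma>" and "\<gamma> < 1" and "0 < \<beta>"
  shows "soft_Q \<tau> \<gamma> \<beta> R = soft_Q \<tau> \<gamma> \<beta> R' \<longleftrightarrow> S'_redistribution \<tau> R R'"
  unfolding S'_redistribution_iff_expected_reward_eq
proof
  assume same_Q: "soft_Q \<tau> \<gamma> \<beta> R = soft_Q \<tau> \<gamma> \<beta> R'"
  have params: "0 < \<beta>" "0 \<le> \<gamma>" "\<gamma> < 1"
    using assms by simp_all
  show "expected_reward \<tau> R = expected_reward \<tau> R'"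
  proof (rule soft_bellman_op_reward_determined)
    show "soft_bellman_op \<tau> \<gamma> \<beta> (expected_reward \<tau> R) (soft_Q \<tau> \<gamma> \<beta> R) =
          soft_bellman_op \<tau> \<gamma> \<beta> (expected_reward \<tau> R') (soft_Q \<tau> \<gamma> \<beta> R)"
      using soft_Q_is_fixpoint[OF params, of \<tau> R] soft_Q_is_fixpoint[OF params, of \<tau> R'] same_Q
      by simp
  qed
next
  assume "expected_reward \<tau> R = expected_reward \<tau> R'"
  then show "soft_Q \<tau> \<gamma> \<beta> R = soft_Q \<tau> \<gamma> \<beta> R'"
    by (rule soft_Q_cong_expected_reward)
qed

end
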